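(* Let $A=(a_{ij})_{i,j=1}^n$ be a real symmetric $n\times n$ matrix and $f(x)=x^\top A x$ for $x\in\mathbb{Z}^n$. Then $f$ is multimodular if and only if $$a_{ij}-a_{i,j+1}-a_{i+1,j}+a_{i+1,j+1}\le 0\qquad\text{for all } 0\le i<j\le n,$$ where by convention $a_{ij}=0$ whenever an index equals $0$ or $n+1$.
   Context: For $f:\mathbb{Z}^n\to\mathbb{R}\cup\{+\infty\}$, $\mathrm{dom}\, f=\{x\in\mathbb{Z}^n: f(x)<+\infty\}$. Let $e_i$ denote the $i$-th unit vector of $\mathbb{Z}^n$ and $\mathcal{F}=\{-e_1,\ e_1-e_2,\ e_2-e_3,\ \dots,\ e_{n-1}-e_n,\ e_n\}$. A function $f:\mathbb{Z}^n\to\mathbb{R}\cup\{+\infty\}$ is called multimodular if $\mathrm{dom}\, f\neq\emptyset$ and $f(z+d)+f(z+d')\ge f(z)+f(z+d+d')$ for all $z\in\mathrm{dom}\, f$ and all distinct $d,d'\in\mathcal{F}$ (with the usual conventions for $+\infty$). *)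

theory Defs
  imports "HOL-Library.Extended_Real"
begin

text \<open>Integer vectors in Z^n are represented as functions nat => int that vanish
  outside the index set {1..n}.\<close>

definition zvec :: "nat \<Rightarrow> (nat \<Rightarrow> int) set" where
  "zvec n = {x. \<forall>k. k \<notin> {1..n} \<longrightarrow> x k = 0}"

definition unitv :: "nat \<Rightarrow> nat \<Rightarrow> int" where
  "unitv i = (\<lambda>k. if k = i then 1 else 0)"

definition mmdirs :: "nat \<Rightarrow> (nat \<Rightarrow> int) set" where
  "mmdirs n = {(\<lambda>k. - unitv 1 k)} \<union> {(\<lambda>k. unitv i k - unitv (i + 1) k) | i. 1 \<le> i \<and> i < n} \<union> {unitv n}"

definition mmdom :: "nat \<Rightarrow> ((nat \<Rightarrow> int) \<Rightarrow> ereal) \<Rightarrow> (nat \<Rightarrow> int) set" where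
  "mmdom n f = {x \<in> zvec n. f x < \<infinity>}"

text \<open>Multimodularity of f : Z^n -> R \<union> {+\<infinity>} (values are assumed to avoid -\<infinity>).\<close>

definition multimodular :: "nat \<Rightarrow> ((nat \<Rightarrow> int) \<Rightarrow> ereal) \<Rightarrow> bool" where
  "multimodular n f \<longleftrightarrow>
     mmdom n f \<noteq> {} \<and>
     (\<forall>z \<in> mmdom n f. \<forall>d \<in> mmdirs n. \<forall>d' \<in> mmdirs n. d \<noteq> d' \<longrightarrow>
        f (\<lambda>k. z k + d k) + f (\<lambda>k. z k + d' k) \<ge> f z + f (\<lambda>k. z k + d k + d' k))"

definition quadform :: "nat \<Rightarrow> (nat \<Rightarrow> nat \<Rightarrow> real) \<Rightarrow> (nat \<Rightarrow> int) \<Rightarrow> real" where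
  "quadform n A x = (\<Sum>i=1..n. \<Sum>j=1..n. A i j * real_of_int (x i) * real_of_int (x j))"

definition aext :: "nat \<Rightarrow> (nat \<Rightarrow> nat \<Rightarrow> real) \<Rightarrow> nat \<Rightarrow> nat \<Rightarrow> real" where
  "aext n A i j = (if i \<in> {1..n} \<and> j \<in> {1..n} then A i j else 0)"

end

theory Submission imports Defs begin

text \<open>The second difference of f(x) = x^T A x along directions d, d' is the constant
  -(d^T A d' + d'^T A d) = -2 d^T A d', so f is multimodular iff d^T A d' <= 0 for all distinct
  d, d' in F. The directions of F are exactly the vectors e_i - e_(i+1), 0 <= i <= n, cut down
  to {1..n} (so that e_0 = e_(n+1) = 0), and (e_i - e_(i+1))^T A (e_j - e_(j+1)) is the stated
  mixed difference of the extended entries.\<close>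

definition bilin :: "nat \<Rightarrow> (nat \<Rightarrow> nat \<Rightarrow> real) \<Rightarrow> (nat \<Rightarrow> int) \<Rightarrow> (nat \<Rightarrow> int) \<Rightarrow> real" where
  "bilin n A x y = (\<Sum>i=1..n. \<Sum>j=1..n. A i j * of_int (x i) * of_int (y j))"

definition mmdir :: "nat \<Rightarrow> nat \<Rightarrow> nat \<Rightarrow> int" where
  "mmdir n i = (\<lambda>k. if k \<in> {1..n} then unitv i k - unitv (Suc i) k else 0)"

lemma bilin_cong:
  assumes "\<And>k. k \<in> {1..n} \<Longrightarrow> x k = x' k" and "\<And>k. k \<in> {1..n} \<Longrightarrow> y k = y' k"
  shows "bilin n A x y = bilin n A x' y'"
  unfolding bilin_def using assms by (intro sum.cong refl) auto

lemma bilin_commute: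
  assumes "\<forall>i \<in> {1..n}. \<forall>j \<in> {1..n}. A i j = A j i"
  shows "bilin n A x y = bilin n A y x"
  unfolding bilin_def using assms
  by (subst sum.swap) (auto intro!: sum.cong simp: algebra_simps)

lemma bilin_diff_left: "bilin n A (\<lambda>k. x k - x' k) y = bilin n A x y - bilin n A x' y"
  unfolding bilin_def by (simp add: algebra_simps sum_subtractf)

lemma bilin_diff_right: "bilin n A x (\<lambda>k. y k - y' k) = bilin n A x y - bilin n A x y'"
  unfolding bilin_def by (simp add: algebra_simps sum_subtractf)

lemma bilin_unitv: "bilin n A (unitv p) (unitv q) = aext n A p q"
proof -
  have "bilin n A (unitv p) (unitv q) =
      (\<Sum>i\<in>{1..n}. if i = p then (\<Sum>j\<in>{1..n}. if j = q then A p q else 0) else 0)"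
    unfolding bilin_def unitv_def by (intro sum.cong refl) (auto simp: if_distrib cong: if_cong)
  then show ?thesis
    by (simp add: aext_def)
qed

lemma bilin_mmdir:
  "bilin n A (mmdir n i) (mmdir n j) =
     aext n A i j - aext n A i (j + 1) - aext n A (i + 1) j + aext n A (i + 1) (j + 1)"
proof -
  have "bilin n A (mmdir n i) (mmdir n j) =
      bilin n A (\<lambda>k. unitv i k - unitv (Suc i) k) (\<lambda>k. unitv j k - unitv (Suc j) k)"
    by (rule bilin_cong) (simp_all add: mmdir_def)
  then show ?thesis
    by (simp add: bilin_diff_left bilin_diff_right bilin_unitv)
qed

lemma quadform_second_difference:
  "quadform n A (\<lambda>k. z k + d k) + quadform n A (\<lambda>k. z k + d' k)
     - quadform n A z - quadform n A (\<lambda>k. z k + d k + d' k)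
   = - (bilin n A d d' + bilin n A d' d)"
  unfolding quadform_def bilin_def
  by (simp add: sum_subtractf sum.distrib[symmetric] sum_negf[symmetric] algebra_simps)

lemma mmdirs_eq_image_mmdir: "n \<ge> 1 \<Longrightarrow> mmdirs n = mmdir n ` {..n}"
proof -
  assume "n \<ge> 1"
  have "{..n} = {0} \<union> {i. 1 \<le> i \<and> i < n} \<union> {n}"
    using \<open>n \<ge> 1\<close> by auto
  moreover have "mmdir n 0 = (\<lambda>k. - unitv 1 k)" "mmdir n n = unitv n"
    and "1 \<le> i \<Longrightarrow> i < n \<Longrightarrow> mmdir n i = (\<lambda>k. unitv i k - unitv (i + 1) k)" for i
    using \<open>n \<ge> 1\<close> by (auto simp: mmdir_def unitv_def)
  ultimately show ?thesis
    unfolding mmdirs_def by (auto simp: image_Un setcompr_eq_image)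
qed

lemma inj_on_mmdir: "inj_on (mmdir n) {..n}"
proof (rule linorder_inj_onI)
  fix i j assume "i < j" "j \<in> {..n}"
  then have "mmdir n i (Suc i) \<noteq> mmdir n j (Suc i)"
    by (auto simp: mmdir_def unitv_def)
  then show "mmdir n i \<noteq> mmdir n j"
    by metis
qed auto

lemma multimodular_quadform_iff:
  assumes "\<forall>i \<in> {1..n}. \<forall>j \<in> {1..n}. A i j = A j i"
  shows "multimodular n (\<lambda>x. ereal (quadform n A x)) \<longleftrightarrow>
    (\<forall>d \<in> mmdirs n. \<forall>d' \<in> mmdirs n. d \<noteq> d' \<longrightarrow> bilin n A d d' \<le> 0)"
proof -
  have second_difference_nonneg:
    "quadform n A z + quadform n A (\<lambda>k. z k + d k + d' k)
       \<le> quadform n A (\<lambda>k. z k + d k) + quadform n A (\<lambda>k. z k + d' k)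
     \<longleftrightarrow> bilin n A d d' \<le> 0" for z d d'
    using quadform_second_difference[of n A z d d'] bilin_commute[OF assms, of d d'] by linarith
  have "(\<lambda>k. 0) \<in> mmdom n (\<lambda>x. ereal (quadform n A x))"
    by (simp add: mmdom_def zvec_def)
  then show ?thesis
    unfolding multimodular_def using second_difference_nonneg by auto
qed

lemma symmetric_offdiagonal_iff_ordered:
  fixes n :: "'a :: linorder"
  assumes "\<And>i j. P i j \<longleftrightarrow> P j i"
  shows "(\<forall>i \<in> {..n}. \<forall>j \<in> {..n}. i \<noteq> j \<longrightarrow> P i j) \<longleftrightarrow> (\<forall>i j. i < j \<and> j \<le> n \<longrightarrow> P i j)"
proof safe
  fix i j assume "\<forall>i \<in> {..n}. \<forall>j \<in> {..n}. i \<noteq> j \<longrightarrow> P i j" "i < j" "j \<le> n"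
  then show "P i j" by auto
next
  fix i j assume ordered: "\<forall>i j. i < j \<and> j \<le> n \<longrightarrow> P i j" and "i \<le> n" "j \<le> n" "i \<noteq> j"
  from \<open>i \<noteq> j\<close> show "P i j"
  proof (rule linorder_neqE)
    assume "j < i"
    then show "P i j" using ordered \<open>i \<le> n\<close> assms[of i j] by blast
  qed (use ordered \<open>j \<le> n\<close> in blast)
qed

theorem proposition2p2:
  fixes n :: nat and A :: "nat \<Rightarrow> nat \<Rightarrow> real"
  assumes "n \<ge> 1"
    and "\<forall>i \<in> {1..n}. \<forall>j \<in> {1..n}. A i j = A j i"
  shows "multimodular n (\<lambda>x. ereal (quadform n A x)) \<longleftrightarrow>
    (\<forall>i j. i < j \<and> j \<le> n \<longrightarrow>
       aext n A i j - aext n A i (j + 1) - aext n A (i + 1) j + aext n A (i + 1) (j + 1) \<le> 0)"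
proof -
  have "multimodular n (\<lambda>x. ereal (quadform n A x)) \<longleftrightarrow>
      (\<forall>i \<in> {..n}. \<forall>j \<in> {..n}. i \<noteq> j \<longrightarrow> bilin n A (mmdir n i) (mmdir n j) \<le> 0)"
    unfolding multimodular_quadform_iff[OF assms(2)] mmdirs_eq_image_mmdir[OF assms(1)]
    using inj_on_mmdir[of n] by (auto simp: inj_on_eq_iff)
  also have "\<dots> \<longleftrightarrow> (\<forall>i j. i < j \<and> j \<le> n \<longrightarrow> bilin n A (mmdir n i) (mmdir n j) \<le> 0)"
    by (rule symmetric_offdiagonal_iff_ordered) (simp add: bilin_commute[OF assms(2)])
  finally show ?thesis
    by (simp only: bilin_mmdir)
qed

end
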